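(* Let $L$ be a $\mathbb{Z}$-colorable link. Then there exist a regular diagram $D$ of $L$ and a $\mathbb{Z}$-coloring $\gamma$ on $D$ such that $\mathrm{Im}(\gamma)=\{0,a_1,a_2,\dots,a_n\}$ for some positive integer $n$ and integers $a_i>0$ $(i=1,\dots,n)$.
   Context: Let $D$ be a regular diagram of a link $L$; an arc of $D$ is a maximal connected piece of the diagram that is unbroken (it passes over crossings and ends at undercrossings). A $\mathbb{Z}$-coloring on $D$ is a map $\gamma:\{\text{arcs of } D\}\to\mathbb{Z}$ such that at each crossing of $D$ with over arc $a$ and under arcs $b,c$ one has $2\gamma(a)=\gamma(b)+\gamma(c)$. The coloring is trivial if it assigns the same color to all arcs. A link is $\mathbb{Z}$-colorable if it has a diagram admitting a non-trivial $\mathbb{Z}$-coloring. *)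

theory Defs
  imports Main
begin

text \<open>Combinatorial data of a regular link diagram: its arcs and its crossings.
  A crossing is recorded as a triple (over arc, under arc, under arc).\<close>
record 'a diagram =
  arcs :: "'a set"
  crossings :: "('a \<times> 'a \<times> 'a) set"

definition regular_diagram :: "'a diagram \<Rightarrow> bool" where
  "regular_diagram D \<longleftrightarrow> finite (arcs D) \<and> arcs D \<noteq> {} \<and> finite (crossings D) \<and>
     (\<forall>(a, b, c) \<in> crossings D. a \<in> arcs D \<and> b \<in> arcs D \<and> c \<in> arcs D)"

definition Z_coloring :: "'a diagram \<Rightarrow> ('a \<Rightarrow> int) \<Rightarrow> bool" where
  "Z_coloring D \<gamma> \<longleftrightarrow> (\<forall>(a, b, c) \<in> crossings D. 2 * \<gamma> a = \<gamma> b + \<gamma> c)"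

definition trivial_coloring :: "'a diagram \<Rightarrow> ('a \<Rightarrow> int) \<Rightarrow> bool" where
  "trivial_coloring D \<gamma> \<longleftrightarrow> (\<forall>x \<in> arcs D. \<forall>y \<in> arcs D. \<gamma> x = \<gamma> y)"

text \<open>The relation "D is a regular diagram of the link L" is a parameter
  (links being e.g. equivalence classes of diagrams modulo Reidemeister moves).\<close>
definition Z_colorable :: "('a diagram \<Rightarrow> 'l \<Rightarrow> bool) \<Rightarrow> 'l \<Rightarrow> bool" where
  "Z_colorable diagram_of L \<longleftrightarrow>
     (\<exists>D. diagram_of D L \<and> regular_diagram D \<and>
          (\<exists>\<gamma>. Z_coloring D \<gamma> \<and> \<not> trivial_coloring D \<gamma>))"

end

theory Submission
  imports Defs
begin

text \<open>Subtracting the minimal colour gives a \<open>\<int>\<close>-colouring of the same diagram whose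
  image contains \<open>0\<close> and is otherwise positive; nontriviality guarantees that some
  positive colour occurs, and the positive colours are then listed as \<open>a\<^sub>1, \<dots>, a\<^sub>n\<close>.\<close>

lemma Z_coloring_affine:
  assumes "Z_coloring D \<gamma>"
  shows "Z_coloring D (\<lambda>x. k * \<gamma> x + c)"
  using assms unfolding Z_coloring_def by (auto simp: algebra_simps)

lemma trivial_coloring_iff_image_subset_singleton:
  "trivial_coloring D \<gamma> \<longleftrightarrow> (\<exists>c. \<gamma> ` arcs D \<subseteq> {c})"
  unfolding trivial_coloring_def by blast

lemma zero_in_image_minus_Min:
  fixes g :: "'a \<Rightarrow> 'b::linordered_ab_group_add"
  assumes "finite A" "A \<noteq> {}"
  shows "0 \<in> (\<lambda>x. g x - Min (g ` A)) ` A"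
proof -
  have "Min (g ` A) \<in> g ` A" using assms by simp
  then obtain x where "x \<in> A" "g x = Min (g ` A)" by (metis imageE)
  then show ?thesis by force
qed

lemma finite_set_enumeration:
  assumes "finite S" "S \<noteq> {}"
  obtains n :: nat and a where "n > 0" "a ` {1..n} = S"
proof -
  obtain a where "bij_betw a {1..card S} S"
    using ex_bij_betw_nat_finite_1[OF \<open>finite S\<close>] by blast
  then have "a ` {1..card S} = S" by (simp add: bij_betw_def)
  moreover have "card S > 0" using assms by (simp add: card_gt_0_iff)
  ultimately show thesis using that by blast
qed

theorem lemma2p1:
  fixes diagram_of :: "'a diagram \<Rightarrow> 'l \<Rightarrow> bool" and L :: 'l
  assumes "Z_colorable diagram_of L"
  shows "\<exists>D \<gamma>. diagram_of D L \<and> regular_diagram D \<and> Z_coloring D \<gamma> \<and>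
           (\<exists>n::nat. n > 0 \<and> (\<exists>a :: nat \<Rightarrow> int. (\<forall>i \<in> {1..n}. a i > 0) \<and>
              \<gamma> ` arcs D = insert 0 (a ` {1..n})))"
proof -
  obtain D g where D: "diagram_of D L" "regular_diagram D" "Z_coloring D g"
    and nontrivial: "\<not> trivial_coloring D g"
    using assms unfolding Z_colorable_def by blast
  have arcs: "finite (arcs D)" "arcs D \<noteq> {}"
    using D(2) unfolding regular_diagram_def by auto
  define \<gamma> where "\<gamma> = (\<lambda>x. g x - Min (g ` arcs D))"
  define S where "S = \<gamma> ` arcs D - {0}"
  have coloring: "Z_coloring D \<gamma>"
    unfolding \<gamma>_def using Z_coloring_affine[OF D(3), of 1 "- Min (g ` arcs D)"] by simp
  have image: "\<gamma> ` arcs D = insert 0 S"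
    unfolding S_def \<gamma>_def using zero_in_image_minus_Min[where g = g, OF arcs] by blast
  have positive: "\<forall>y \<in> S. y > 0"
    unfolding S_def \<gamma>_def using arcs(1) by (auto simp: less_le)
  have "finite S" unfolding S_def using arcs by simp
  moreover have "S \<noteq> {}"
  proof
    assume "S = {}"
    then have "\<forall>x \<in> arcs D. \<gamma> x = 0" using image by (metis imageI singletonD)
    then have "g ` arcs D \<subseteq> {Min (g ` arcs D)}" by (simp add: \<gamma>_def image_subset_iff)
    then show False
      using nontrivial trivial_coloring_iff_image_subset_singleton by blast
  qed
  ultimately obtain n :: nat and a where "n > 0" and enum: "a ` {1..n} = S"
    by (rule finite_set_enumeration)
  moreover have "\<forall>i \<in> {1..n}. a i > 0" using positive enum by blast
  ultimately show ?thesis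
    using D(1,2) coloring image by metis
qed

end
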